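(* Let $f$, strategies $\sigma_k$ and half-lines $w^{(k)}$ be produced by Algorithm 1 (as described in the context). Then for every iteration $k$ for which $\sigma_{k+1}$ is defined, $\chi(f^{(\sigma_{k+1})})\le\chi(f^{(\sigma_k)})$.
   Context: Setting: $f:\mathbb{R}^n\to\mathbb{R}^n$ with $f_i(x)=\min_{a\in A_i}f^a_i(x)$, where each $A_i$ is finite and each $f^a_i:\mathbb{R}^n\to\mathbb{R}$ is polyhedral (piecewise affine on finitely many polyhedra covering $\mathbb{R}^n$), order-preserving ($x\le y\Rightarrow f^a_i(x)\le f^a_i(y)$), additively homogeneous ($f^a_i(\lambda+x)=\lambda+f^a_i(x)$) and convex. A strategy is a map $\sigma$ with $\sigma(i)\in A_i$ for each $i\in[n]$; $f^{(\sigma)}$ is the map with coordinates $f^{(\sigma)}_i=f^{\sigma(i)}_i$. For a polyhedral order-preserving additively homogeneous $g$, the cycle time $\chi(g)=\lim_k g^k(x)/k$ exists. A half-line is $w:t\mapsto t\eta+v$ considered for $t$ large (germ at infinity); it is invariant under $g$ if $g(w(t))=w(t+1)$ for all $t$ large, super-invariant if $g(w(t))\le w(t+1)$ for all $t$ large; every such $g$ has an invariant half-line, whose slope equals $\chi(g)$. Half-lines are compared coordinatewise for $t$ large. For polyhedral convex order-preserving additively homogeneous $g$ with $\eta=\chi(g)$: $\hat g(\eta)=\lim_t g(t\eta)/t$, $\hat g^{\eta}(v)=\lim_t(g(t\eta+v)-t\hat g(\eta))$, $\bar g=\hat g^{\eta}-\eta$; for a super-invariant half-line $w:t\mapsto t\eta+v$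 of $g$ with $\eta=\chi(g)$, $Q_g(w)$ denotes the half-line $t\mapsto t\eta+\lim_k\bar g^k(v)$, which is the unique invariant half-line of $g$ agreeing with $w$ on the critical nodes of $g$. Algorithm 1: (1) $k=0$; choose a strategy $\sigma_0$ and an invariant half-line $w^{(0)}:t\mapsto t\eta^{(0)}+v^{(0)}$ of $f^{(\sigma_0)}$. (2) If $f(w^{(k)}(t))=w^{(k)}(t+1)$ for $t$ large, stop, returning $w^{(k)}$ and $\sigma_k$. (3) Otherwise choose $\sigma_{k+1}$ with $f(w^{(k)}(t))=f^{(\sigma_{k+1})}(w^{(k)}(t))$ for $t$ large, conservatively: for each $i$, $\sigma_{k+1}(i)=\sigma_k(i)$ whenever $f_i(w^{(k)}(t))=f^{(\sigma_k)}_i(w^{(k)}(t))$ for $t$ large. (4) Compute any invariant half-line $t\mapsto t\eta^{(k+1)}+v'$ of $f^{(\sigma_{k+1})}$; if $\eta^{(k+1)}\neq\eta^{(k)}$ set $w^{(k+1)}:t\mapsto t\eta^{(k+1)}+v'$ and go to (6). (5) Otherwise (degenerate iteration) set $w^{(k+1)}=Q_{f^{(\sigma_{k+1})}}(w^{(k)})$. (6) Increase $k$ by one and go to (2). *)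

theory Defs
  imports "HOL-Analysis.Analysis"
begin

text \<open>Vectors of R^n are represented as real^'n for a finite index type 'n;
  the order on real^'n is the coordinatewise order of the library.\<close>

definition polyhedral_fun :: "(real^'n \<Rightarrow> real) \<Rightarrow> bool" where
  "polyhedral_fun g \<longleftrightarrow>
     (\<exists>P. finite P \<and> (\<forall>S\<in>P. polyhedron S) \<and> \<Union>P = UNIV \<and>
          (\<forall>S\<in>P. \<exists>a b. \<forall>x\<in>S. g x = a \<bullet> x + b))"

definition order_preserving_fun :: "(real^'n \<Rightarrow> real) \<Rightarrow> bool" where
  "order_preserving_fun g \<longleftrightarrow> (\<forall>x y. x \<le> y \<longrightarrow> g x \<le> g y)"

definition add_homogeneous_fun :: "(real^'n \<Rightarrow> real) \<Rightarrow> bool" where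
  "add_homogeneous_fun g \<longleftrightarrow> (\<forall>c x. g (vec c + x) = c + g x)"

definition minmap :: "('n \<Rightarrow> 'a \<Rightarrow> (real^'n \<Rightarrow> real)) \<Rightarrow> ('n \<Rightarrow> 'a set) \<Rightarrow> real^'n \<Rightarrow> real^'n" where
  "minmap F A x = (\<chi> i. Min ((\<lambda>a. F i a x) ` A i))"

definition is_strategy :: "('n \<Rightarrow> 'a set) \<Rightarrow> ('n \<Rightarrow> 'a) \<Rightarrow> bool" where
  "is_strategy A \<sigma> \<longleftrightarrow> (\<forall>i. \<sigma> i \<in> A i)"

definition strat_map :: "('n \<Rightarrow> 'a \<Rightarrow> (real^'n \<Rightarrow> real)) \<Rightarrow> ('n \<Rightarrow> 'a) \<Rightarrow> real^'n \<Rightarrow> real^'n" where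
  "strat_map F \<sigma> x = (\<chi> i. F i (\<sigma> i) x)"

definition cycle_time :: "(real^'n \<Rightarrow> real^'n) \<Rightarrow> real^'n" where
  "cycle_time g = lim (\<lambda>k. (1 / real k) *\<^sub>R (g ^^ k) 0)"

definition half_line :: "(real^'n) \<times> (real^'n) \<Rightarrow> real \<Rightarrow> real^'n" where
  "half_line w t = t *\<^sub>R fst w + snd w"

definition invariant_hl :: "(real^'n \<Rightarrow> real^'n) \<Rightarrow> (real^'n) \<times> (real^'n) \<Rightarrow> bool" where
  "invariant_hl g w \<longleftrightarrow> (\<forall>\<^sub>F t in at_top. g (half_line w t) = half_line w (t + 1))"

definition super_invariant_hl :: "(real^'n \<Rightarrow> real^'n) \<Rightarrow> (real^'n) \<times> (real^'n) \<Rightarrow> bool" where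
  "super_invariant_hl g w \<longleftrightarrow> (\<forall>\<^sub>F t in at_top. g (half_line w t) \<le> half_line w (t + 1))"

definition hat_map :: "(real^'n \<Rightarrow> real^'n) \<Rightarrow> real^'n \<Rightarrow> real^'n" where
  "hat_map g \<eta> = Lim at_top (\<lambda>t::real. (1 / t) *\<^sub>R g (t *\<^sub>R \<eta>))"

definition hat_map_at :: "(real^'n \<Rightarrow> real^'n) \<Rightarrow> real^'n \<Rightarrow> real^'n \<Rightarrow> real^'n" where
  "hat_map_at g \<eta> v = Lim at_top (\<lambda>t::real. g (t *\<^sub>R \<eta> + v) - t *\<^sub>R hat_map g \<eta>)"

definition bar_map :: "(real^'n \<Rightarrow> real^'n) \<Rightarrow> real^'n \<Rightarrow> real^'n \<Rightarrow> real^'n" where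
  "bar_map g \<eta> v = hat_map_at g \<eta> v - \<eta>"

definition Q_hl :: "(real^'n \<Rightarrow> real^'n) \<Rightarrow> (real^'n) \<times> (real^'n) \<Rightarrow> (real^'n) \<times> (real^'n)" where
  "Q_hl g w = (fst w, lim (\<lambda>k. (bar_map g (fst w) ^^ k) (snd w)))"

definition alg1_init where
  "alg1_init F A \<sigma>0 w0 \<longleftrightarrow> is_strategy A \<sigma>0 \<and> invariant_hl (strat_map F \<sigma>0) w0"

text \<open>Steps (2)--(5) of Algorithm 1 going from (sigma_k, w^(k)) to (sigma_(k+1), w^(k+1)):
  the stopping test fails, sigma_(k+1) is chosen conservatively as in (3), and
  w^(k+1) is obtained as in (4)/(5).\<close>
definition alg1_step where
  "alg1_step F A \<sigma> w \<sigma>' w' \<longleftrightarrow>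
     \<not> (\<forall>\<^sub>F t in at_top. minmap F A (half_line w t) = half_line w (t + 1)) \<and>
     is_strategy A \<sigma>' \<and>
     (\<forall>\<^sub>F t in at_top. minmap F A (half_line w t) = strat_map F \<sigma>' (half_line w t)) \<and>
     (\<forall>i. (\<forall>\<^sub>F t in at_top. minmap F A (half_line w t) $ i = strat_map F \<sigma> (half_line w t) $ i)
            \<longrightarrow> \<sigma>' i = \<sigma> i) \<and>
     (\<exists>\<eta>' v'. invariant_hl (strat_map F \<sigma>') (\<eta>', v') \<and>
        (if \<eta>' \<noteq> fst w then w' = (\<eta>', v') else w' = Q_hl (strat_map F \<sigma>') w))"

definition alg1_run where
  "alg1_run F A \<sigma> w N \<longleftrightarrow> alg1_init F A (\<sigma> 0) (w 0) \<and>
     (\<forall>k<N. alg1_step F A (\<sigma> k) (w k) (\<sigma> (Suc k)) (w (Suc k)))"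

end

theory Submission
  imports Defs
begin

text \<open>A polyhedral topical map g is sup-norm nonexpansive, so the orbit of 0 stays at bounded
  distance from the orbit of any point of a half-line t \<mapsto> t \<eta> + v. Hence the slope of an
  invariant half-line of g is its cycle time, and the slope of a super-invariant half-line is an
  upper bound for it. Along a run of Algorithm 1 every w^(k) is super-invariant for f^(sigma_k),
  with slope chi(f^(sigma_k)); in a degenerate iteration this holds because Q iterates the
  monotone map bar g, which moves v downwards to a limit that is still super-invariant.
  As f \<le> f^(sigma_k) and f^(sigma_(k+1)) coincides with f along w^(k), the half-line w^(k) is
  also super-invariant for f^(sigma_(k+1)), which gives the claim.\<close>

lemma polyhedral_fun_eventually_affine_on_ray:
  assumes "polyhedral_fun \<phi>"
  shows "\<exists>a b. \<forall>\<^sub>F t in at_top. \<phi> (t *\<^sub>R \<eta> + v) = a * t + b"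
proof -
  obtain P where P: "finite P" "\<forall>S\<in>P. polyhedron S" "\<Union>P = UNIV"
      "\<forall>S\<in>P. \<exists>a b. \<forall>x\<in>S. \<phi> x = a \<bullet> x + b"
    using assms unfolding polyhedral_fun_def by blast
  define I where "I S = (\<lambda>t. t *\<^sub>R \<eta> + v) -` S" for S
  have "(\<Union>S\<in>P. I S) = UNIV"
    using P(3) unfolding I_def by blast
  then have "\<not> bdd_above (\<Union>S\<in>P. I S)"
    by (metis bdd_above_def gt_ex leD UNIV_I)
  then obtain S where S: "S \<in> P" "\<not> bdd_above (I S)"
    using P(1) by auto
  have "I S = (\<lambda>t. t *\<^sub>R \<eta>) -` ((+) (- v) ` S)"
    unfolding I_def by force
  moreover have "convex S"
    using P(2) S(1) polyhedron_imp_convex by blast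
  ultimately have interval: "is_interval (I S)"
    by (simp add: is_interval_convex_1 convex_linear_vimage convex_translation linear_scaleR_left)
  obtain t0 where t0: "t0 \<in> I S"
    using S(2) unfolding bdd_above_def by fastforce
  have ray: "t \<in> I S" if "t \<ge> t0" for t
  proof -
    obtain t1 where "t1 \<in> I S" "t \<le> t1"
      using S(2) unfolding bdd_above_def by (meson linorder_le_cases)
    then show ?thesis
      using interval t0 that unfolding is_interval_1 by blast
  qed
  obtain a b where "\<forall>x\<in>S. \<phi> x = a \<bullet> x + b"
    using P(4) S(1) by blast
  then have "\<forall>\<^sub>F t in at_top. \<phi> (t *\<^sub>R \<eta> + v) = (a \<bullet> \<eta>) * t + (a \<bullet> v + b)"
    using ray unfolding eventually_at_top_linorder I_def
    by (intro exI[of _ t0]) (auto simp: inner_add_right)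
  then show ?thesis
    by blast
qed

lemma bounded_affine_at_top_imp_slope_zero:
  fixes a b d :: real
  assumes "\<forall>\<^sub>F t in at_top. \<bar>t * a + b\<bar> \<le> d"
  shows "a = 0"
proof (rule ccontr)
  assume "a \<noteq> 0"
  obtain T where T: "\<And>t. t \<ge> T \<Longrightarrow> \<bar>t * a + b\<bar> \<le> d"
    using assms unfolding eventually_at_top_linorder by blast
  define t where "t = max T ((\<bar>b\<bar> + \<bar>d\<bar> + 1) / \<bar>a\<bar>)"
  have "(\<bar>b\<bar> + \<bar>d\<bar> + 1) / \<bar>a\<bar> \<le> t"
    unfolding t_def by simp
  then have "\<bar>b\<bar> + \<bar>d\<bar> + 1 \<le> t * \<bar>a\<bar>"
    using \<open>a \<noteq> 0\<close> by (simp add: divide_le_eq)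
  also have "\<dots> \<le> \<bar>t * a\<bar>"
    by (metis abs_ge_self abs_ge_zero abs_mult mult_right_mono)
  finally have "\<bar>b\<bar> + \<bar>d\<bar> + 1 \<le> \<bar>t * a\<bar>" .
  moreover have "T \<le> t"
    unfolding t_def by simp
  ultimately show False
    using T by fastforce
qed

lemma vec_shift_bound: "\<exists>d. x \<le> y + vec d \<and> y \<le> (x::real^'n) + vec d"
proof -
  have "x $ i \<le> y $ i + norm (x - y) \<and> y $ i \<le> x $ i + norm (x - y)" for i
    using component_le_norm_cart[of "x - y" i] by (simp add: abs_le_iff)
  then show ?thesis
    by (auto simp: less_eq_vec_def)
qed

lemma decseq_vec_bounded_below_convergent:
  fixes s :: "nat \<Rightarrow> real^'n"
  assumes dec: "\<And>k. s (Suc k) \<le> s k" and bounded: "\<And>k. b \<le> s k"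
  obtains L where "s \<longlonglongrightarrow> L" "\<And>k. L \<le> s k"
proof -
  have "\<exists>L. (\<lambda>k. s k $ i) \<longlonglongrightarrow> L \<and> (\<forall>k. L \<le> s k $ i)" for i
  proof -
    have "decseq (\<lambda>k. s k $ i)"
      using dec by (intro decseq_SucI) (simp add: less_eq_vec_def)
    moreover have "\<forall>k. b $ i \<le> s k $ i"
      using bounded by (simp add: less_eq_vec_def)
    ultimately show ?thesis
      by (rule decseq_convergent) blast
  qed
  then obtain L where L: "\<And>i. (\<lambda>k. s k $ i) \<longlonglongrightarrow> L i" "\<And>i k. L i \<le> s k $ i"
    by metis
  show ?thesis
  proof
    show "s \<longlonglongrightarrow> (\<chi> i. L i)"
      by (rule vec_tendstoI) (simp add: L(1))
    show "(\<chi> i. L i) \<le> s k" for k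
      by (simp add: less_eq_vec_def L(2))
  qed
qed

lemma tendsto_scaled_ray:
  fixes \<eta> c :: "'a::real_normed_vector"
  shows "(\<lambda>m. (1 / real m) *\<^sub>R ((T + real m) *\<^sub>R \<eta> + c)) \<longlonglongrightarrow> \<eta>"
proof -
  have "(\<lambda>m. \<eta> + inverse (real m) *\<^sub>R (T *\<^sub>R \<eta> + c)) \<longlonglongrightarrow> \<eta> + 0 *\<^sub>R (T *\<^sub>R \<eta> + c)"
    by (intro tendsto_intros lim_inverse_n)
  moreover have "\<forall>\<^sub>F m in sequentially.
      \<eta> + inverse (real m) *\<^sub>R (T *\<^sub>R \<eta> + c) = (1 / real m) *\<^sub>R ((T + real m) *\<^sub>R \<eta> + c)"
    using eventually_gt_at_top[of 0]
    by eventually_elim (simp add: algebra_simps divide_inverse)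
  ultimately show ?thesis
    by (simp add: Lim_transform_eventually)
qed

lemma invariant_imp_super_invariant_hl: "invariant_hl g w \<Longrightarrow> super_invariant_hl g w"
  unfolding invariant_hl_def super_invariant_hl_def by (auto elim: eventually_mono)

lemma component_scaleR_mono:
  fixes x y :: "real^'n"
  shows "x \<le> y \<Longrightarrow> 0 \<le> c \<Longrightarrow> (c *\<^sub>R x) $ i \<le> (c *\<^sub>R y) $ i"
  by (simp add: less_eq_vec_def mult_left_mono)

locale topical_map =
  fixes g :: "real^'n::finite \<Rightarrow> real^'n"
  assumes mono: "x \<le> y \<Longrightarrow> g x \<le> g y"
    and add_vec: "g (vec c + x) = vec c + g x"
    and polyhedral_component: "polyhedral_fun (\<lambda>x. g x $ i)"
begin

lemma le_add_vec: "x \<le> y + vec d \<Longrightarrow> g x \<le> g y + vec d"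
  using mono[of x "vec d + y"] add_vec[of d y] by (simp add: add.commute)

lemma funpow_le_add_vec: "x \<le> y + vec d \<Longrightarrow> (g ^^ m) x \<le> (g ^^ m) y + vec d"
  by (induction m) (auto intro: le_add_vec)

lemma eventually_affine_on_ray: "\<exists>\<alpha> \<beta>. \<forall>\<^sub>F t in at_top. g (t *\<^sub>R \<eta> + v) = t *\<^sub>R \<alpha> + \<beta>"
proof -
  have "\<forall>i. \<exists>a b. \<forall>\<^sub>F t in at_top. g (t *\<^sub>R \<eta> + v) $ i = a * t + b"
    using polyhedral_fun_eventually_affine_on_ray[OF polyhedral_component] by blast
  then obtain a b where "\<And>i. \<forall>\<^sub>F t in at_top. g (t *\<^sub>R \<eta> + v) $ i = a i * t + b i"
    by metis
  then have "\<forall>\<^sub>F t in at_top. \<forall>i. g (t *\<^sub>R \<eta> + v) $ i = a i * t + b i"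
    by (rule eventually_all_finite)
  then have "\<forall>\<^sub>F t in at_top. g (t *\<^sub>R \<eta> + v) = t *\<^sub>R (\<chi> i. a i) + (\<chi> i. b i)"
    by eventually_elim (simp add: vec_eq_iff mult.commute)
  then show ?thesis
    by blast
qed

text \<open>Both sides are affine in t for large t, and nonexpansiveness keeps g on this ray at
  bounded distance from the invariant half-line; so the slopes agree.\<close>
lemma eventually_translation_on_ray:
  assumes "invariant_hl g (\<eta>, u)"
  shows "\<exists>c. \<forall>\<^sub>F t in at_top. g (t *\<^sub>R \<eta> + v) = t *\<^sub>R \<eta> + c"
proof -
  obtain \<alpha> \<beta> where affine: "\<forall>\<^sub>F t in at_top. g (t *\<^sub>R \<eta> + v) = t *\<^sub>R \<alpha> + \<beta>"
    using eventually_affine_on_ray by blast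
  obtain d where d: "v \<le> u + vec d" "u \<le> v + vec d"
    using vec_shift_bound by blast
  have "\<forall>\<^sub>F t in at_top. \<bar>t * (\<alpha> $ i - \<eta> $ i) + (\<beta> $ i - \<eta> $ i - u $ i)\<bar> \<le> d" for i
    using affine assms unfolding invariant_hl_def half_line_def
  proof eventually_elim
    case (elim t)
    have "t *\<^sub>R \<alpha> + \<beta> \<le> (t + 1) *\<^sub>R \<eta> + u + vec d"
      using le_add_vec[of "t *\<^sub>R \<eta> + v" "t *\<^sub>R \<eta> + u" d] d(1) elim
      by (simp add: less_eq_vec_def)
    moreover have "(t + 1) *\<^sub>R \<eta> + u \<le> t *\<^sub>R \<alpha> + \<beta> + vec d"
      using le_add_vec[of "t *\<^sub>R \<eta> + u" "t *\<^sub>R \<eta> + v" d] d(2) elim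
      by (simp add: less_eq_vec_def)
    ultimately have "t * \<alpha> $ i + \<beta> $ i \<le> (t + 1) * \<eta> $ i + u $ i + d"
        "(t + 1) * \<eta> $ i + u $ i \<le> t * \<alpha> $ i + \<beta> $ i + d"
      unfolding less_eq_vec_def by auto
    then show ?case
      by (simp add: abs_le_iff algebra_simps)
  qed
  then have "\<alpha> $ i - \<eta> $ i = 0" for i
    by (rule bounded_affine_at_top_imp_slope_zero)
  then have "\<alpha> = \<eta>"
    by (simp add: vec_eq_iff)
  with affine show ?thesis
    by blast
qed

lemma funpow_on_invariant_ray:
  assumes "\<And>t. t \<ge> T \<Longrightarrow> g (t *\<^sub>R \<eta> + u) = (t + 1) *\<^sub>R \<eta> + u"
  shows "(g ^^ m) (T *\<^sub>R \<eta> + u) = (T + real m) *\<^sub>R \<eta> + u"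
proof (induction m)
  case (Suc m)
  then show ?case
    using assms[of "T + real m"] by (simp add: algebra_simps)
qed simp

lemma funpow_on_super_invariant_ray:
  assumes "\<And>t. t \<ge> T \<Longrightarrow> g (t *\<^sub>R \<eta> + v) \<le> (t + 1) *\<^sub>R \<eta> + v"
  shows "(g ^^ m) (T *\<^sub>R \<eta> + v) \<le> (T + real m) *\<^sub>R \<eta> + v"
proof (induction m)
  case (Suc m)
  have "(g ^^ Suc m) (T *\<^sub>R \<eta> + v) \<le> g ((T + real m) *\<^sub>R \<eta> + v)"
    using Suc by (simp add: mono)
  also have "\<dots> \<le> (T + real (Suc m)) *\<^sub>R \<eta> + v"
    using assms[of "T + real m"] by (simp add: algebra_simps)
  finally show ?case .
qed simp

lemma orbit_upper_bound:
  assumes "super_invariant_hl g (\<eta>, v)"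
  obtains T d where "\<And>m. (g ^^ m) 0 \<le> (T + real m) *\<^sub>R \<eta> + (v + vec d)"
proof -
  obtain T where T: "\<And>t. t \<ge> T \<Longrightarrow> g (t *\<^sub>R \<eta> + v) \<le> (t + 1) *\<^sub>R \<eta> + v"
    using assms by (auto simp: super_invariant_hl_def half_line_def eventually_at_top_linorder)
  obtain d where d: "0 \<le> (T *\<^sub>R \<eta> + v) + vec d"
    using vec_shift_bound by blast
  have "(g ^^ m) 0 \<le> (T + real m) *\<^sub>R \<eta> + (v + vec d)" for m
  proof -
    have "(g ^^ m) 0 \<le> (g ^^ m) (T *\<^sub>R \<eta> + v) + vec d"
      using d by (rule funpow_le_add_vec)
    also have "\<dots> \<le> (T + real m) *\<^sub>R \<eta> + (v + vec d)"
      using funpow_on_super_invariant_ray[where T = T, OF T] by (simp add: less_eq_vec_def add.assoc)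
    finally show ?thesis .
  qed
  then show ?thesis
    by (rule that)
qed

lemma orbit_lower_bound:
  assumes "invariant_hl g (\<eta>, u)"
  obtains T d where "\<And>m. (T + real m) *\<^sub>R \<eta> + (u - vec d) \<le> (g ^^ m) 0"
proof -
  obtain T where T: "\<And>t. t \<ge> T \<Longrightarrow> g (t *\<^sub>R \<eta> + u) = (t + 1) *\<^sub>R \<eta> + u"
    using assms by (auto simp: invariant_hl_def half_line_def eventually_at_top_linorder)
  obtain d where d: "T *\<^sub>R \<eta> + u \<le> 0 + vec d"
    using vec_shift_bound by blast
  have "(T + real m) *\<^sub>R \<eta> + (u - vec d) \<le> (g ^^ m) 0" for m
    using funpow_le_add_vec[OF d, of m] funpow_on_invariant_ray[where T = T, OF T]
    by (auto simp: less_eq_vec_def algebra_simps)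
  then show ?thesis
    by (rule that)
qed

lemma orbit_scaled_tendsto_slope:
  assumes inv: "invariant_hl g (\<eta>, u)"
  shows "(\<lambda>m. (1 / real m) *\<^sub>R (g ^^ m) 0) \<longlonglongrightarrow> \<eta>"
proof (rule vec_tendstoI)
  fix i
  obtain T d where lower: "\<And>m. (T + real m) *\<^sub>R \<eta> + (u - vec d) \<le> (g ^^ m) 0"
    using orbit_lower_bound[OF inv] by blast
  obtain T' d' where upper: "\<And>m. (g ^^ m) 0 \<le> (T' + real m) *\<^sub>R \<eta> + (u + vec d')"
    using orbit_upper_bound[OF invariant_imp_super_invariant_hl[OF inv]] by blast
  show "(\<lambda>m. ((1 / real m) *\<^sub>R (g ^^ m) 0) $ i) \<longlonglongrightarrow> \<eta> $ i"
  proof (rule tendsto_sandwich)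
    show "\<forall>\<^sub>F m in sequentially.
        ((1 / real m) *\<^sub>R ((T + real m) *\<^sub>R \<eta> + (u - vec d))) $ i \<le> ((1 / real m) *\<^sub>R (g ^^ m) 0) $ i"
      using lower by (intro always_eventually allI component_scaleR_mono) simp_all
    show "\<forall>\<^sub>F m in sequentially.
        ((1 / real m) *\<^sub>R (g ^^ m) 0) $ i \<le> ((1 / real m) *\<^sub>R ((T' + real m) *\<^sub>R \<eta> + (u + vec d'))) $ i"
      using upper by (intro always_eventually allI component_scaleR_mono) simp_all
  qed (intro tendsto_vec_nth tendsto_scaled_ray)+
qed

lemma cycle_time_eq_slope: "invariant_hl g (\<eta>, u) \<Longrightarrow> cycle_time g = \<eta>"
  unfolding cycle_time_def by (rule limI) (rule orbit_scaled_tendsto_slope)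

lemma cycle_time_le_super_invariant_slope:
  assumes inv: "invariant_hl g (\<eta>', u)" and super: "super_invariant_hl g (\<eta>, v)"
  shows "cycle_time g \<le> \<eta>"
  unfolding less_eq_vec_def
proof
  fix i
  obtain T d where upper: "\<And>m. (g ^^ m) 0 \<le> (T + real m) *\<^sub>R \<eta> + (v + vec d)"
    using orbit_upper_bound[OF super] by blast
  have orbit: "(\<lambda>m. (1 / real m) *\<^sub>R (g ^^ m) 0) \<longlonglongrightarrow> cycle_time g"
    using orbit_scaled_tendsto_slope[OF inv] cycle_time_eq_slope[OF inv] by simp
  have ray: "(\<lambda>m. (1 / real m) *\<^sub>R ((T + real m) *\<^sub>R \<eta> + (v + vec d))) \<longlonglongrightarrow> \<eta>"
    by (rule tendsto_scaled_ray)
  have "\<forall>\<^sub>F m in sequentially.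
      ((1 / real m) *\<^sub>R (g ^^ m) 0) $ i \<le> ((1 / real m) *\<^sub>R ((T + real m) *\<^sub>R \<eta> + (v + vec d))) $ i"
    using upper by (intro always_eventually allI component_scaleR_mono) simp_all
  then show "cycle_time g $ i \<le> \<eta> $ i"
    by (rule tendsto_le[OF sequentially_bot tendsto_vec_nth[OF ray] tendsto_vec_nth[OF orbit]])
qed

context
  fixes \<eta> u :: "real^'n"
  assumes invariant: "invariant_hl g (\<eta>, u)"
begin

lemma hat_map_eq_slope: "hat_map g \<eta> = \<eta>"
proof -
  obtain c where c: "\<forall>\<^sub>F t in at_top. g (t *\<^sub>R \<eta> + 0) = t *\<^sub>R \<eta> + c"
    using eventually_translation_on_ray[OF invariant] by blast
  have "((\<lambda>t. \<eta> + inverse t *\<^sub>R c) \<longlongrightarrow> \<eta> + 0 *\<^sub>R c) at_top"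
    by (intro tendsto_intros tendsto_inverse_0_at_top filterlim_ident)
  moreover have "\<forall>\<^sub>F t in at_top. \<eta> + inverse t *\<^sub>R c = (1 / t) *\<^sub>R g (t *\<^sub>R \<eta>)"
    using c eventually_gt_at_top[of 0]
    by eventually_elim (simp add: scaleR_add_right divide_inverse)
  ultimately have "((\<lambda>t. (1 / t) *\<^sub>R g (t *\<^sub>R \<eta>)) \<longlongrightarrow> \<eta>) at_top"
    by (simp add: Lim_transform_eventually)
  then show ?thesis
    unfolding hat_map_def by (rule tendsto_Lim[OF trivial_limit_at_top_linorder])
qed

lemma eventually_eq_bar_map:
  "\<forall>\<^sub>F t in at_top. g (t *\<^sub>R \<eta> + v) = (t + 1) *\<^sub>R \<eta> + bar_map g \<eta> v"
proof -
  obtain c where c: "\<forall>\<^sub>F t in at_top. g (t *\<^sub>R \<eta> + v) = t *\<^sub>R \<eta> + c"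
    using eventually_translation_on_ray[OF invariant] by blast
  then have "\<forall>\<^sub>F t in at_top. g (t *\<^sub>R \<eta> + v) - t *\<^sub>R hat_map g \<eta> = c"
    by eventually_elim (simp add: hat_map_eq_slope)
  then have hat_map_at: "hat_map_at g \<eta> v = c"
    unfolding hat_map_at_def by (intro tendsto_Lim[OF trivial_limit_at_top_linorder] tendsto_eventually)
  from c show ?thesis
    by eventually_elim (simp add: bar_map_def hat_map_at algebra_simps)
qed

lemma bar_map_mono: "x \<le> y \<Longrightarrow> bar_map g \<eta> x \<le> bar_map g \<eta> y"
proof -
  assume "x \<le> y"
  have "\<forall>\<^sub>F t::real in at_top. bar_map g \<eta> x \<le> bar_map g \<eta> y"
    using eventually_eq_bar_map[of x] eventually_eq_bar_map[of y]
  proof eventually_elim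
    case (elim t)
    have "g (t *\<^sub>R \<eta> + x) \<le> g (t *\<^sub>R \<eta> + y)"
      using \<open>x \<le> y\<close> by (intro mono) (simp add: less_eq_vec_def)
    with elim show ?case
      by (simp add: less_eq_vec_def)
  qed
  then show ?thesis
    by simp
qed

lemma bar_map_add_vec: "bar_map g \<eta> (vec c + x) = vec c + bar_map g \<eta> x"
proof -
  have "\<forall>\<^sub>F t::real in at_top. bar_map g \<eta> (vec c + x) = vec c + bar_map g \<eta> x"
    using eventually_eq_bar_map[of "vec c + x"] eventually_eq_bar_map[of x]
  proof eventually_elim
    case (elim t)
    have "g (t *\<^sub>R \<eta> + (vec c + x)) = vec c + g (t *\<^sub>R \<eta> + x)"
      using add_vec[of c "t *\<^sub>R \<eta> + x"] by (simp add: algebra_simps)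
    with elim show ?case
      by (simp add: algebra_simps)
  qed
  then show ?thesis
    by simp
qed

lemma bar_map_fixed_point: "bar_map g \<eta> u = u"
proof -
  have "\<forall>\<^sub>F t::real in at_top. bar_map g \<eta> u = u"
    using eventually_eq_bar_map[of u] invariant unfolding invariant_hl_def half_line_def
    by eventually_elim simp
  then show ?thesis
    by simp
qed

lemma bar_map_le_of_super_invariant:
  "super_invariant_hl g (\<eta>, v) \<Longrightarrow> bar_map g \<eta> v \<le> v"
proof -
  assume "super_invariant_hl g (\<eta>, v)"
  then have "\<forall>\<^sub>F t::real in at_top. bar_map g \<eta> v \<le> v"
    using eventually_eq_bar_map[of v] unfolding super_invariant_hl_def half_line_def
    by eventually_elim (simp add: less_eq_vec_def)
  then show ?thesis
    by simp
qed

text \<open>The decreasing iterates of bar g from v stay above the fixed point u - d, so they converge.\<close>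
lemma super_invariant_Q_hl:
  assumes super: "super_invariant_hl g (\<eta>, v)"
  shows "super_invariant_hl g (Q_hl g (\<eta>, v))"
proof -
  define s where "s = (\<lambda>k. (bar_map g \<eta> ^^ k) v)"
  have s_Suc: "s (Suc k) = bar_map g \<eta> (s k)" for k
    by (simp add: s_def)
  have decreasing: "s (Suc k) \<le> s k" for k
  proof (induction k)
    case 0
    show ?case
      using bar_map_le_of_super_invariant[OF super] by (simp add: s_def)
  next
    case (Suc k)
    then show ?case
      unfolding s_Suc[of "Suc k"] s_Suc[of k] by (rule bar_map_mono)
  qed
  obtain d where "u \<le> v + vec d"
    using vec_shift_bound by blast
  then have lower: "vec (- d) + u \<le> s k" for k
  proof (induction k)
    case 0
    then show ?case
      by (simp add: s_def less_eq_vec_def algebra_simps)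
  next
    case (Suc k)
    then have "bar_map g \<eta> (vec (- d) + u) \<le> s (Suc k)"
      unfolding s_Suc by (intro bar_map_mono)
    then show ?case
      by (simp add: bar_map_add_vec bar_map_fixed_point)
  qed
  obtain L where L: "s \<longlonglongrightarrow> L" "\<And>k. L \<le> s k"
    using decseq_vec_bounded_below_convergent[of s, OF decreasing lower] by blast
  have Q: "Q_hl g (\<eta>, v) = (\<eta>, L)"
    using limI[OF L(1)] by (simp add: Q_hl_def s_def)
  have L_super: "bar_map g \<eta> L \<le> L"
    unfolding less_eq_vec_def
  proof
    fix i
    have "bar_map g \<eta> L $ i \<le> s (Suc k) $ i" for k
      using bar_map_mono[OF L(2)[of k]] by (simp add: s_Suc less_eq_vec_def)
    then show "bar_map g \<eta> L $ i \<le> L $ i"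
      by (intro LIMSEQ_le_const[OF LIMSEQ_Suc[OF tendsto_vec_nth[OF L(1)]]]) blast
  qed
  show ?thesis
    unfolding Q super_invariant_hl_def half_line_def
    using eventually_eq_bar_map[of L] by eventually_elim (use L_super in \<open>simp add: less_eq_vec_def\<close>)
qed

end

end

locale topical_min_map =
  fixes F :: "'n::finite \<Rightarrow> 'a \<Rightarrow> real^'n \<Rightarrow> real" and A :: "'n \<Rightarrow> 'a set"
  assumes finite_actions: "finite (A i)"
    and polyhedral: "a \<in> A i \<Longrightarrow> polyhedral_fun (F i a)"
    and order_preserving: "a \<in> A i \<Longrightarrow> order_preserving_fun (F i a)"
    and add_homogeneous: "a \<in> A i \<Longrightarrow> add_homogeneous_fun (F i a)"
begin

lemma topical_map_strat_map:
  assumes "is_strategy A \<sigma>"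
  shows "topical_map (strat_map F \<sigma>)"
proof
  have \<sigma>: "\<sigma> i \<in> A i" for i
    using assms unfolding is_strategy_def by blast
  show "strat_map F \<sigma> x \<le> strat_map F \<sigma> y" if "x \<le> y" for x y
    using order_preserving[OF \<sigma>] that
    unfolding less_eq_vec_def strat_map_def order_preserving_fun_def by simp
  show "strat_map F \<sigma> (vec c + x) = vec c + strat_map F \<sigma> x" for c x
    using add_homogeneous[OF \<sigma>] unfolding vec_eq_iff strat_map_def add_homogeneous_fun_def by simp
  show "polyhedral_fun (\<lambda>x. strat_map F \<sigma> x $ i)" for i
    using polyhedral[OF \<sigma>] unfolding strat_map_def by simp
qed

lemma minmap_le_strat_map:
  assumes "is_strategy A \<sigma>"
  shows "minmap F A x \<le> strat_map F \<sigma> x"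
  using assms finite_actions
  by (simp add: less_eq_vec_def minmap_def strat_map_def is_strategy_def)

lemma alg1_step_super_invariant:
  assumes \<sigma>: "is_strategy A \<sigma>" and step: "alg1_step F A \<sigma> w \<sigma>' w'"
    and super: "super_invariant_hl (strat_map F \<sigma>) w"
  shows "super_invariant_hl (strat_map F \<sigma>') w"
proof -
  have "\<forall>\<^sub>F t in at_top. minmap F A (half_line w t) = strat_map F \<sigma>' (half_line w t)"
    using step unfolding alg1_step_def by blast
  then show ?thesis
    using super unfolding super_invariant_hl_def
    by eventually_elim (metis minmap_le_strat_map[OF \<sigma>] order_trans)
qed

lemma alg1_step_invariants:
  assumes \<sigma>: "is_strategy A \<sigma>" and step: "alg1_step F A \<sigma> w \<sigma>' w'"
    and super: "super_invariant_hl (strat_map F \<sigma>) w"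
  shows "is_strategy A \<sigma>' \<and> super_invariant_hl (strat_map F \<sigma>') w'
    \<and> (\<exists>u. invariant_hl (strat_map F \<sigma>') (fst w', u))"
proof -
  have \<sigma>': "is_strategy A \<sigma>'"
    using step unfolding alg1_step_def by blast
  interpret topical_map "strat_map F \<sigma>'"
    using \<sigma>' by (rule topical_map_strat_map)
  obtain \<eta>' v' where invariant: "invariant_hl (strat_map F \<sigma>') (\<eta>', v')"
    and next_hl: "if \<eta>' \<noteq> fst w then w' = (\<eta>', v') else w' = Q_hl (strat_map F \<sigma>') w"
    using step unfolding alg1_step_def by blast
  show ?thesis
  proof (cases "\<eta>' = fst w")
    case True
    have "super_invariant_hl (strat_map F \<sigma>') (\<eta>', snd w)"
      using alg1_step_super_invariant[OF \<sigma> step super] True by simp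
    then have "super_invariant_hl (strat_map F \<sigma>') (Q_hl (strat_map F \<sigma>') (\<eta>', snd w))"
      by (rule super_invariant_Q_hl[OF invariant])
    moreover have "w' = Q_hl (strat_map F \<sigma>') (\<eta>', snd w)" "fst w' = \<eta>'"
      using next_hl True by (simp_all add: Q_hl_def)
    ultimately show ?thesis
      using \<sigma>' invariant by auto
  next
    case False
    then show ?thesis
      using next_hl \<sigma>' invariant invariant_imp_super_invariant_hl by auto
  qed
qed

lemma alg1_run_invariants:
  assumes run: "alg1_run F A \<sigma> w N" and "j \<le> N"
  shows "is_strategy A (\<sigma> j) \<and> super_invariant_hl (strat_map F (\<sigma> j)) (w j)
    \<and> (\<exists>u. invariant_hl (strat_map F (\<sigma> j)) (fst (w j), u))"
  using \<open>j \<le> N\<close>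
proof (induction j)
  case 0
  then show ?case
    using run invariant_imp_super_invariant_hl[of "strat_map F (\<sigma> 0)" "w 0"]
    by (cases "w 0") (auto simp: alg1_run_def alg1_init_def)
next
  case (Suc j)
  then have \<sigma>: "is_strategy A (\<sigma> j)" and super: "super_invariant_hl (strat_map F (\<sigma> j)) (w j)"
    by auto
  have step: "alg1_step F A (\<sigma> j) (w j) (\<sigma> (Suc j)) (w (Suc j))"
    using run Suc.prems unfolding alg1_run_def by simp
  show ?case
    using alg1_step_invariants[OF \<sigma> step super] .
qed

lemma alg1_run_cycle_time_decreasing:
  assumes run: "alg1_run F A \<sigma> w N" and "k < N"
  shows "cycle_time (strat_map F (\<sigma> (Suc k))) \<le> cycle_time (strat_map F (\<sigma> k))"
proof -
  obtain u where \<sigma>: "is_strategy A (\<sigma> k)" and super: "super_invariant_hl (strat_map F (\<sigma> k)) (w k)"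
    and invariant: "invariant_hl (strat_map F (\<sigma> k)) (fst (w k), u)"
    using alg1_run_invariants[OF run, of k] \<open>k < N\<close> by auto
  obtain u' \<eta>' where invariant': "invariant_hl (strat_map F (\<sigma> (Suc k))) (\<eta>', u')"
    using alg1_run_invariants[OF run, of "Suc k"] \<open>k < N\<close> by auto
  have step: "alg1_step F A (\<sigma> k) (w k) (\<sigma> (Suc k)) (w (Suc k))"
    using run \<open>k < N\<close> unfolding alg1_run_def by blast
  interpret old: topical_map "strat_map F (\<sigma> k)"
    using \<sigma> by (rule topical_map_strat_map)
  interpret new: topical_map "strat_map F (\<sigma> (Suc k))"
    using alg1_step_invariants[OF \<sigma> step super] by (intro topical_map_strat_map) blast
  have "super_invariant_hl (strat_map F (\<sigma> (Suc k))) (fst (w k), snd (w k))"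
    using alg1_step_super_invariant[OF \<sigma> step super] by simp
  then have "cycle_time (strat_map F (\<sigma> (Suc k))) \<le> fst (w k)"
    by (rule new.cycle_time_le_super_invariant_slope[OF invariant'])
  also have "fst (w k) = cycle_time (strat_map F (\<sigma> k))"
    by (rule old.cycle_time_eq_slope[OF invariant, symmetric])
  finally show ?thesis .
qed

end

theorem lemma4p2:
  fixes F :: "'n::finite \<Rightarrow> 'a \<Rightarrow> (real^'n \<Rightarrow> real)"
    and A :: "'n \<Rightarrow> 'a set"
    and \<sigma> :: "nat \<Rightarrow> 'n \<Rightarrow> 'a"
    and w :: "nat \<Rightarrow> (real^'n) \<times> (real^'n)"
    and N k :: nat
  assumes fin: "\<And>i. finite (A i)" and ne: "\<And>i. A i \<noteq> {}"
    and poly: "\<And>i a. a \<in> A i \<Longrightarrow> polyhedral_fun (F i a)"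
    and mono: "\<And>i a. a \<in> A i \<Longrightarrow> order_preserving_fun (F i a)"
    and hom: "\<And>i a. a \<in> A i \<Longrightarrow> add_homogeneous_fun (F i a)"
    and cvx: "\<And>i a. a \<in> A i \<Longrightarrow> convex_on UNIV (F i a)"
    and run: "alg1_run F A \<sigma> w N"
    and k: "k < N"
  shows "cycle_time (strat_map F (\<sigma> (Suc k))) \<le> cycle_time (strat_map F (\<sigma> k))"
proof -
  interpret topical_min_map F A
    using fin poly mono hom by unfold_locales
  show ?thesis
    using run k by (rule alg1_run_cycle_time_decreasing)
qed

end
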